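(* Let $A\subset\mathbb{R}^d$ and $0<r<\operatorname{reach}A$. Then the mapping $\psi_1^A$ is $\frac1r$-Lipschitz on $T_1(A)$.
   Context: For $A\subset\mathbb{R}^d$ and $a\in A$, $\operatorname{reach}(A,a)=\sup\{r\geq0: B(a,r)\subset\operatorname{Unp}A\}$, where $\operatorname{Unp}A$ is the set of points having a unique nearest point in $A$, and $\operatorname{reach}A=\inf_{a\in A}\operatorname{reach}(A,a)$. $\operatorname{Tan}(A,x)$ is the tangent cone ($u\in\operatorname{Tan}(A,x)$ iff $u=0$ or $r_i(x_i-x)\to u$ for some $x\neq x_i\in A$, $x_i\to x$, $r_i>0$), $\widetilde{\operatorname{Tan}}(A,x)=\operatorname{span}\operatorname{Tan}(A,x)$, $T_1(A)=\{x\in A:\dim\widetilde{\operatorname{Tan}}(A,x)=1\}$ and $\psi_1^A(x)=\widetilde{\operatorname{Tan}}(A,x)\in G(d,1)$ for $x\in T_1(A)$. $G(d,1)$ carries the metric $\rho_1(U,V)=\max\big(\sup_{u\in U,|u|=1}\mathrm{dist}(u,V),\sup_{v\in V,|v|=1}\mathrm{dist}(v,U)\big)$. *)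

theory Defs
  imports "HOL-Analysis.Analysis"
begin

definition Unp :: "'a::euclidean_space set \<Rightarrow> 'a set" where
  "Unp A = {x. \<exists>!a. a \<in> A \<and> (\<forall>b\<in>A. dist x a \<le> dist x b)}"

definition reach_at :: "'a::euclidean_space set \<Rightarrow> 'a \<Rightarrow> ereal" where
  "reach_at A a = Sup {ereal r | r. r \<ge> 0 \<and> ball a r \<subseteq> Unp A}"

definition reach :: "'a::euclidean_space set \<Rightarrow> ereal" where
  "reach A = (INF a\<in>A. reach_at A a)"

definition Tan :: "'a::euclidean_space set \<Rightarrow> 'a \<Rightarrow> 'a set" where
  "Tan A x = {u. u = 0 \<or> (\<exists>xs rs. (\<forall>i. xs i \<in> A \<and> xs i \<noteq> x \<and> rs i > (0::real)) \<and>
       xs \<longlonglongrightarrow> x \<and> (\<lambda>i. rs i *\<^sub>R (xs i - x)) \<longlonglongrightarrow> u)}"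

definition Tan_span :: "'a::euclidean_space set \<Rightarrow> 'a \<Rightarrow> 'a set" where
  "Tan_span A x = span (Tan A x)"

definition T1 :: "'a::euclidean_space set \<Rightarrow> 'a set" where
  "T1 A = {x \<in> A. dim (Tan_span A x) = 1}"

text \<open>psi_1^A(x) in G(d,1), represented as the 1-dimensional linear subspace itself.\<close>
definition psi1 :: "'a::euclidean_space set \<Rightarrow> 'a \<Rightarrow> 'a set" where
  "psi1 A x = Tan_span A x"

definition rho1 :: "'a::euclidean_space set \<Rightarrow> 'a set \<Rightarrow> real" where
  "rho1 U V = max (SUP u\<in>{u\<in>U. norm u = 1}. infdist u V)
                  (SUP v\<in>{v\<in>V. norm v = 1}. infdist v U)"

end

(* If reach A > R then A is closed, the nearest-point map is continuous on the R-neighbourhood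
   of A, and a Brouwer fixed-point argument shows that a normal segment from q in A (one all of
   whose points have nearest point q) can be prolonged until its length reaches R. Approximating
   a unit vector n polar to Tan(A,x) by directions of such segments issuing from points of A near x,
   and passing to the limit, shows that x is the nearest point of x + s n for every s < R. So the
   ball of radius r about x + r n misses A, which bounds the sine of the angle between b - x and the
   tangent line at x by |b - x|/(2r) for every b in A. Applying this at x and at y to the chord
   between them bounds the sine of the angle between the two tangent lines by |x - y|/r. For unit
   vectors u, v this sine is sqrt (1 - (u.v)^2), and it equals rho1 of the lines they span. *)

theory Submission
  imports Defs
begin

section \<open>Nearest points\<close>

definition nearest_point :: "'a::euclidean_space set \<Rightarrow> 'a \<Rightarrow> 'a" where
  "nearest_point A p = (THE a. a \<in> A \<and> (\<forall>b\<in>A. dist p a \<le> dist p b))"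

lemma
  assumes "p \<in> Unp A"
  shows nearest_point_in: "nearest_point A p \<in> A"
    and nearest_point_le: "b \<in> A \<Longrightarrow> dist p (nearest_point A p) \<le> dist p b"
proof -
  have "\<exists>!a. a \<in> A \<and> (\<forall>b\<in>A. dist p a \<le> dist p b)" using assms by (simp add: Unp_def)
  from theI'[OF this] show "nearest_point A p \<in> A" "b \<in> A \<Longrightarrow> dist p (nearest_point A p) \<le> dist p b"
    unfolding nearest_point_def by auto
qed

lemma nearest_point_eqI:
  assumes "p \<in> Unp A" "a \<in> A" "\<And>b. b \<in> A \<Longrightarrow> dist p a \<le> dist p b"
  shows "nearest_point A p = a"
proof -
  have "\<exists>!a. a \<in> A \<and> (\<forall>b\<in>A. dist p a \<le> dist p b)" using assms by (simp add: Unp_def)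
  from the1_equality[OF this] assms show ?thesis unfolding nearest_point_def by auto
qed

lemma dist_nearest_point:
  assumes "p \<in> Unp A"
  shows "dist p (nearest_point A p) = infdist p A"
  using nearest_point_in[OF assms] nearest_point_le[OF assms]
  by (metis antisym cINF_greatest empty_iff infdist_le infdist_notempty)

lemma inner_normal_le_norm_square:
  assumes "q + \<rho> *\<^sub>R m \<in> Unp A" "nearest_point A (q + \<rho> *\<^sub>R m) = q" "b \<in> A"
  shows "2 * \<rho> * (m \<bullet> (b - q)) \<le> norm (b - q) ^ 2"
proof -
  have "norm (\<rho> *\<^sub>R m) \<le> norm (\<rho> *\<^sub>R m - (b - q))"
    using nearest_point_le[OF assms(1,3)] assms(2) by (simp add: dist_norm algebra_simps)
  then have "norm (\<rho> *\<^sub>R m) ^ 2 \<le> norm (\<rho> *\<^sub>R m - (b - q)) ^ 2"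
    by (simp add: power_mono)
  then show ?thesis
    unfolding power2_norm_eq_inner by (simp add: inner_diff_left inner_diff_right inner_commute)
qed

lemma nearest_point_on_segment:
  assumes "p \<in> Unp A" "a = nearest_point A p" "0 \<le> t" "t \<le> 1" "a + t *\<^sub>R (p - a) \<in> Unp A"
  shows "nearest_point A (a + t *\<^sub>R (p - a)) = a"
proof (rule nearest_point_eqI[OF assms(5)])
  let ?w = "a + t *\<^sub>R (p - a)"
  show "a \<in> A" using nearest_point_in[OF assms(1)] assms(2) by simp
  have "p - ?w = (1 - t) *\<^sub>R (p - a)" by (simp add: algebra_simps)
  then have "dist p ?w = (1 - t) * norm (p - a)" "dist ?w a = t * norm (p - a)"
    using assms(3,4) by (simp_all add: dist_norm)
  then have "dist p a = dist p ?w + dist ?w a" by (simp add: dist_norm algebra_simps)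
  moreover have "dist p a \<le> dist p b" if "b \<in> A" for b
    using nearest_point_le[OF assms(1) that] assms(2) by simp
  ultimately show "dist ?w a \<le> dist ?w b" if "b \<in> A" for b
    using that dist_triangle[of p b ?w] by (smt (verit, best) dist_commute)
qed

lemma ball_subset_Unp_if_less_reach:
  assumes "ereal R < reach A" "a \<in> A"
  shows "ball a R \<subseteq> Unp A"
proof -
  have "ereal R < Sup {ereal r | r. r \<ge> 0 \<and> ball a r \<subseteq> Unp A}"
    using assms INF_lower[of a A "reach_at A"] by (simp add: reach_def reach_at_def)
  then obtain r where "ball a r \<subseteq> Unp A" "R < r" by (auto simp: less_Sup_iff)
  then show ?thesis using subset_ball[of R r a] by auto
qed

lemma closed_if_balls_subset_Unp:
  fixes A :: "'a::euclidean_space set"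
  assumes "R > 0" and balls: "\<And>a. a \<in> A \<Longrightarrow> ball a R \<subseteq> Unp A"
  shows "closed A"
proof -
  have "z \<in> A" if z: "z \<in> closure A" for z
  proof -
    obtain a where "a \<in> A" "dist a z < R" using z \<open>R > 0\<close> closure_approachable by blast
    then have zU: "z \<in> Unp A" using balls by (force simp: dist_commute)
    have "infdist z A = 0" using z \<open>a \<in> A\<close> in_closure_iff_infdist_zero by blast
    then have "z = nearest_point A z" using dist_nearest_point[OF zU] by simp
    then show ?thesis using nearest_point_in[OF zU] by simp
  qed
  then show ?thesis using closure_subset_eq by blast
qed

lemma continuous_on_nearest_point:
  fixes A :: "'a::euclidean_space set"
  assumes "closed A" "compact S" "S \<subseteq> Unp A"
  shows "continuous_on S (nearest_point A)"
proof (cases "S = {}")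
  case False
  then obtain a0 where a0: "a0 \<in> A" using nearest_point_in assms(3) by blast
  obtain M where M: "\<And>y. y \<in> S \<Longrightarrow> norm y \<le> M"
    using compact_imp_bounded[OF assms(2)] bounded_iff by blast
  define T where "T = A \<inter> cball 0 (2 * M + norm a0)"
  have "compact T" unfolding T_def using assms(1) by (simp add: closed_Int_compact)
  moreover have "nearest_point A \<in> S \<rightarrow> T"
  proof
    fix y assume y: "y \<in> S"
    then have yU: "y \<in> Unp A" using assms by auto
    have "norm (nearest_point A y) \<le> norm y + dist y (nearest_point A y)"
      by (metis dist_commute dist_norm norm_triangle_sub)
    also have "\<dots> \<le> norm y + (norm y + norm a0)"
      using nearest_point_le[OF yU a0] norm_triangle_ineq4[of y a0] by (simp add: dist_norm)
    finally show "nearest_point A y \<in> T"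
      unfolding T_def using nearest_point_in[OF yU] M[OF y] by simp
  qed
  moreover have "(\<lambda>x. (x, nearest_point A x)) ` S
      = (S \<times> A) \<inter> {z. dist (fst z) (snd z) = infdist (fst z) A}"
  proof (intro set_eqI iffI)
    fix z assume "z \<in> (S \<times> A) \<inter> {z. dist (fst z) (snd z) = infdist (fst z) A}"
    moreover obtain y b where "z = (y, b)" by (cases z)
    ultimately show "z \<in> (\<lambda>x. (x, nearest_point A x)) ` S"
      using assms(3) nearest_point_eqI[of y A b] by (auto simp: infdist_le)
  next
    fix z assume "z \<in> (\<lambda>x. (x, nearest_point A x)) ` S"
    then obtain y where "y \<in> S" "y \<in> Unp A" "z = (y, nearest_point A y)" using assms(3) by auto
    then show "z \<in> (S \<times> A) \<inter> {z. dist (fst z) (snd z) = infdist (fst z) A}"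
      using nearest_point_in dist_nearest_point by auto
  qed
  moreover have "closed ((S \<times> A) \<inter> {z. dist (fst z) (snd z) = infdist (fst z) A})"
    using compact_imp_closed[OF assms(2)] assms(1)
    by (intro closed_Int closed_Times closed_Collect_eq continuous_intros)
  ultimately show ?thesis using continuous_from_closed_graph by metis
qed simp

section \<open>Normal rays\<close>

lemma brouwer_nearest_point_direction:
  fixes A :: "'a::euclidean_space set"
  assumes "closed A" "0 < \<eta>" "\<eta> < infdist v A" "cball v \<eta> \<subseteq> Unp A"
  obtains y where "y \<in> cball v \<eta>" "y = v + \<eta> *\<^sub>R sgn (y - nearest_point A y)"
proof -
  define F where "F y = v + \<eta> *\<^sub>R sgn (y - nearest_point A y)" for y
  have nonzero: "norm (y - nearest_point A y) \<noteq> 0" if "y \<in> cball v \<eta>" for y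
  proof -
    have "infdist v A \<le> infdist y A + \<eta>" using infdist_triangle[of v A y] that by simp
    moreover have "infdist y A = norm (y - nearest_point A y)"
      using dist_nearest_point[of y A] that assms(4) by (auto simp: dist_norm)
    ultimately show ?thesis using assms(3) by linarith
  qed
  have "continuous_on (cball v \<eta>) F"
    using continuous_on_nearest_point[OF assms(1) compact_cball assms(4)] nonzero
    unfolding F_def sgn_div_norm by (intro continuous_intros) auto
  moreover have "F \<in> cball v \<eta> \<rightarrow> cball v \<eta>"
    using nonzero assms(2) by (auto simp: F_def dist_norm norm_sgn)
  ultimately obtain y where "y \<in> cball v \<eta>" "F y = y" using brouwer_ball[OF assms(2)] by blast
  then show ?thesis using that by (simp add: F_def)
qed

text \<open>The point \<open>y\<close> found by Brouwer's theorem sees \<open>v\<close> on the segment towards its nearest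
  point, which therefore is the nearest point \<open>a\<close> of \<open>v\<close>; so \<open>y\<close> lies on the ray through \<open>a\<close>
  and \<open>v\<close>, at distance \<open>s + \<eta>\<close> from \<open>a\<close>.\<close>

lemma nearest_point_ray_extend:
  fixes A :: "'a::euclidean_space set"
  assumes "closed A" "ball a R \<subseteq> Unp A" "norm m = 1" "0 < \<eta>" "\<eta> \<le> s / 2" "s + \<eta> < R"
    and ray: "nearest_point A (a + s *\<^sub>R m) = a"
  shows "nearest_point A (a + (s + \<eta>) *\<^sub>R m) = a"
proof -
  define v where "v = a + s *\<^sub>R m"
  have "dist a v = s" using assms(3-5) by (simp add: v_def dist_norm)
  have "cball v \<eta> \<subseteq> ball a R"
  proof
    fix y assume "y \<in> cball v \<eta>"
    then show "y \<in> ball a R"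
      using dist_triangle[of a y v] \<open>dist a v = s\<close> assms(6) by simp
  qed
  then have "cball v \<eta> \<subseteq> Unp A" and vU: "v \<in> Unp A"
    using assms(2,4) by (auto simp: subset_iff)
  have "infdist v A = s"
    using dist_nearest_point[OF vU] ray \<open>dist a v = s\<close> by (simp add: v_def dist_commute)
  then have "\<eta> < infdist v A" using assms(4,5) by simp
  then obtain y where y: "y \<in> cball v \<eta>" and yv: "y = v + \<eta> *\<^sub>R sgn (y - nearest_point A y)"
    using brouwer_nearest_point_direction[OF assms(1,4)] \<open>cball v \<eta> \<subseteq> Unp A\<close> by blast
  define b where "b = nearest_point A y"
  define d where "d = norm (y - b)"
  define n where "n = sgn (y - b)"
  have yU: "y \<in> Unp A" using y \<open>cball v \<eta> \<subseteq> Unp A\<close> by auto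
  have "s \<le> d + \<eta>"
    using infdist_triangle[of v A y] dist_nearest_point[OF yU] y \<open>infdist v A = s\<close>
    by (simp add: d_def b_def dist_norm dist_commute)
  then have d: "\<eta> \<le> d" "0 < d" using assms(4,5) by auto
  have n: "norm n = 1" "y - b = d *\<^sub>R n"
    using d by (simp_all add: n_def d_def norm_sgn sgn_div_norm)
  have yvn: "y = v + \<eta> *\<^sub>R n" using yv by (simp add: n_def b_def)
  then have "v = b + (d - \<eta>) *\<^sub>R n" using n(2) by (simp add: algebra_simps)
  then have vb: "v = b + ((d - \<eta>) / d) *\<^sub>R (y - b)" using n(2) d by simp
  have "nearest_point A v = b"
    unfolding vb using d vU vb assms(4) by (intro nearest_point_on_segment[OF yU b_def]) auto
  then have "b = a" using ray by (simp add: v_def)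
  then have "s *\<^sub>R m = (d - \<eta>) *\<^sub>R n" using vb n(2) d by (simp add: v_def)
  moreover have "s = d - \<eta>"
    using arg_cong[OF \<open>s *\<^sub>R m = (d - \<eta>) *\<^sub>R n\<close>, of norm] assms(3-5) n(1) d by simp
  ultimately have "m = n" using assms(4,5) by simp
  then have "y = a + (s + \<eta>) *\<^sub>R m" using yvn by (simp add: v_def algebra_simps)
  then show ?thesis using \<open>b = a\<close> b_def by simp
qed

lemma nearest_point_ray:
  fixes A :: "'a::euclidean_space set"
  assumes "closed A" "ball a R \<subseteq> Unp A" "norm m = 1" "0 < s0" "s0 < R"
    and ray: "nearest_point A (a + s0 *\<^sub>R m) = a"
    and "0 \<le> s" "s < R"
  shows "nearest_point A (a + s *\<^sub>R m) = a"
proof -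
  have ray_upto: "nearest_point A (a + s *\<^sub>R m) = a"
    if "0 \<le> s" "s < R" "s \<le> s0 * (3/2) ^ k" for s k
    using that
  proof (induction k arbitrary: s)
    case 0
    have "a + s *\<^sub>R m \<in> Unp A" "a + s0 *\<^sub>R m \<in> Unp A"
      using 0 assms(2-5) by (auto simp: dist_norm)
    then show ?case
      using nearest_point_on_segment[OF _ ray[symmetric], of "s / s0"] 0 assms(4) by simp
  next
    case (Suc k)
    define s' where "s' = s0 * (3/2) ^ k"
    show ?case
    proof (cases "s \<le> s'")
      case True
      then show ?thesis using Suc by (simp add: s'_def)
    next
      case False
      have "0 < s'" using assms(4) by (simp add: s'_def)
      then have "nearest_point A (a + (s' + (s - s')) *\<^sub>R m) = a"
        using False Suc
        by (intro nearest_point_ray_extend[OF assms(1-3)] Suc.IH) (auto simp: s'_def)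
      then show ?thesis by simp
    qed
  qed
  obtain k where "s / s0 < (3/2) ^ k" using real_arch_pow[of "3/2"] by auto
  then have "s \<le> s0 * (3/2) ^ k" using assms(4) by (simp add: pos_divide_less_eq mult.commute)
  then show ?thesis using ray_upto assms(7,8) by blast
qed

section \<open>Normals polar to the tangent cone\<close>

lemma LIMSEQ_if_dist_le_inverse_Suc:
  assumes "\<And>k. dist (f k) l \<le> inverse (real (Suc k))"
  shows "f \<longlonglongrightarrow> l"
proof -
  have "(\<lambda>k. dist (f k) l) \<longlonglongrightarrow> 0"
    by (rule Lim_null_comparison[OF _ LIMSEQ_inverse_real_of_nat]) (use assms in simp)
  then show ?thesis using tendsto_dist_iff by blast
qed

lemma polar_Tan_inner_le_near:
  fixes A :: "'a::euclidean_space set"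
  assumes polar: "\<And>u. u \<in> Tan A x \<Longrightarrow> n \<bullet> u \<le> 0" and "\<epsilon> > 0"
  shows "\<exists>\<delta>>0. \<forall>q\<in>A. 0 < dist q x \<and> dist q x < \<delta> \<longrightarrow> n \<bullet> (q - x) \<le> \<epsilon> * norm (q - x)"
proof (rule ccontr)
  assume "\<not> ?thesis"
  then have "\<forall>k::nat. \<exists>q. q \<in> A \<and> 0 < dist q x \<and> dist q x < inverse (real (Suc k))
      \<and> n \<bullet> (q - x) > \<epsilon> * norm (q - x)"
    by (metis inverse_positive_iff_positive not_le of_nat_0_less_iff zero_less_Suc)
  then obtain q where q: "\<And>k. q k \<in> A" "\<And>k. 0 < dist (q k) x"
      "\<And>k. dist (q k) x < inverse (real (Suc k))"
      "\<And>k. n \<bullet> (q k - x) > \<epsilon> * norm (q k - x)"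
    by metis
  define d where "d k = (q k - x) /\<^sub>R norm (q k - x)" for k
  have "d k \<in> sphere 0 1" for k using q(2)[of k] by (simp add: d_def dist_norm)
  then obtain u r where "strict_mono r" and du: "(d \<circ> r) \<longlonglongrightarrow> u"
    using seq_compactE[OF compact_imp_seq_compact[OF compact_sphere]] by metis
  have "q \<longlonglongrightarrow> x" using LIMSEQ_if_dist_le_inverse_Suc q(3) less_imp_le by metis
  have "u \<in> Tan A x"
    unfolding Tan_def
  proof (intro CollectI disjI2 exI conjI allI)
    show "(q \<circ> r) i \<in> A" "(q \<circ> r) i \<noteq> x" "inverse (norm ((q \<circ> r) i - x)) > 0" for i
      using q(1,2)[of "r i"] by (auto simp: dist_norm)
    show "(q \<circ> r) \<longlonglongrightarrow> x" using LIMSEQ_subseq_LIMSEQ[OF \<open>q \<longlonglongrightarrow> x\<close> \<open>strict_mono r\<close>] .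
    show "(\<lambda>i. inverse (norm ((q \<circ> r) i - x)) *\<^sub>R ((q \<circ> r) i - x)) \<longlonglongrightarrow> u"
      using du by (simp add: d_def comp_def divide_inverse_commute)
  qed
  moreover have "\<epsilon> \<le> n \<bullet> u"
  proof (rule LIMSEQ_le_const)
    show "(\<lambda>k. n \<bullet> (d \<circ> r) k) \<longlonglongrightarrow> n \<bullet> u" by (intro tendsto_intros du)
    show "\<exists>N. \<forall>k\<ge>N. \<epsilon> \<le> n \<bullet> (d \<circ> r) k"
    proof (intro exI allI impI)
      fix k
      have "norm (q (r k) - x) > 0" using q(2)[of "r k"] by (simp add: dist_norm)
      then show "\<epsilon> \<le> n \<bullet> (d \<circ> r) k" using q(4)[of "r k"]
        by (simp add: d_def divide_simps)
    qed
  qed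
  ultimately show False using polar[of u] \<open>\<epsilon> > 0\<close> by linarith
qed

lemma unit_vectors_close_if_multiples_close:
  fixes m n :: "'a::real_normed_vector"
  assumes "norm m = 1" "norm n = 1" "0 < t" "0 \<le> D" "norm (D *\<^sub>R m - t *\<^sub>R n) \<le> c * t" "c \<le> 1/2"
  shows "norm (m - n) \<le> 4 * c"
proof -
  have "\<bar>D - t\<bar> \<le> c * t"
    using norm_triangle_ineq3[of "D *\<^sub>R m" "t *\<^sub>R n"] assms by simp
  have "D * norm (m - n) = norm (D *\<^sub>R (m - n))" using assms(4) by simp
  also have "\<dots> = norm ((D *\<^sub>R m - t *\<^sub>R n) + (t - D) *\<^sub>R n)" by (simp add: algebra_simps)
  also have "\<dots> \<le> norm (D *\<^sub>R m - t *\<^sub>R n) + \<bar>t - D\<bar>"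
    using norm_triangle_ineq[of "D *\<^sub>R m - t *\<^sub>R n" "(t - D) *\<^sub>R n"] assms(2) by simp
  also have "\<dots> \<le> 2 * c * t" using assms(5) \<open>\<bar>D - t\<bar> \<le> c * t\<close> by (simp add: abs_minus_commute)
  finally have "D * norm (m - n) \<le> 2 * c * t" .
  moreover have "t / 2 \<le> D"
    using \<open>\<bar>D - t\<bar> \<le> c * t\<close> mult_right_mono[OF assms(6), of t] assms(3) by linarith
  ultimately have "t / 2 * norm (m - n) \<le> 2 * c * t"
    using mult_right_mono[of "t / 2" D "norm (m - n)"] by simp
  then show ?thesis using assms(3) by (simp add: field_simps)
qed

text \<open>In the application \<open>q\<close> is the nearest point of \<open>p = x + t n\<close>, \<open>p = q + D m\<close> with \<open>norm m = 1\<close>,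
  and \<open>e = x - q\<close>: the first bound says that \<open>x\<close> lies outside the normal ball of radius \<open>\<rho>\<close>
  at \<open>q\<close>, the second that \<open>n\<close> is almost polar to the chord from \<open>x\<close> to \<open>q\<close>.\<close>

lemma norm_le_if_normal_polar_bounds:
  fixes m n e :: "'a::real_inner"
  assumes "D *\<^sub>R m = t *\<^sub>R n + e" "2 * \<rho> * (m \<bullet> e) \<le> norm e ^ 2" "- (n \<bullet> e) \<le> \<epsilon> * norm e"
    and "0 < D" "D \<le> t" "t \<le> \<rho>" "0 \<le> \<epsilon>"
  shows "norm e \<le> 2 * \<epsilon> * t"
proof (cases "e = 0")
  case True
  then show ?thesis using assms(4,5,7) by simp
next
  case False
  have "D * (m \<bullet> e) = t * (n \<bullet> e) + norm e ^ 2"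
    using arg_cong[OF assms(1), of "\<lambda>v. v \<bullet> e"] by (simp add: inner_add_left power2_norm_eq_inner)
  then have "2 * \<rho> * (t * (n \<bullet> e) + norm e ^ 2) = D * (2 * \<rho> * (m \<bullet> e))" by simp
  also have "\<dots> \<le> D * norm e ^ 2" by (rule mult_left_mono) (use assms(2,4) in auto)
  also have "\<dots> \<le> t * norm e ^ 2" using assms(5) by (rule mult_right_mono) simp
  finally have "2 * \<rho> * norm e ^ 2 \<le> t * norm e ^ 2 + 2 * \<rho> * t * (- (n \<bullet> e))"
    by (simp add: algebra_simps)
  also have "\<dots> \<le> \<rho> * norm e ^ 2 + 2 * \<rho> * t * (\<epsilon> * norm e)"
    using assms(3-6) by (intro add_mono mult_right_mono mult_left_mono) auto
  finally have "(\<rho> * norm e) * norm e \<le> (\<rho> * norm e) * (2 * \<epsilon> * t)"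
    by (simp add: power2_eq_square algebra_simps)
  moreover have "\<rho> * norm e > 0" using assms(4-6) False by simp
  ultimately show ?thesis using mult_le_cancel_left_pos by blast
qed

lemma nearest_point_normal_ray:
  fixes A :: "'a::euclidean_space set"
  assumes "closed A" and balls: "\<And>a. a \<in> A \<Longrightarrow> ball a R \<subseteq> Unp A"
    and "p \<in> Unp A" "p \<notin> A" "dist p (nearest_point A p) < R" "0 \<le> s" "s < R"
  shows "nearest_point A (nearest_point A p + s *\<^sub>R sgn (p - nearest_point A p))
    = nearest_point A p"
proof -
  define q where "q = nearest_point A p"
  have "q \<in> A" "q \<noteq> p" using nearest_point_in[OF assms(3)] assms(4) by (auto simp: q_def)
  then have "q + dist p q *\<^sub>R sgn (p - q) = p" by (simp add: sgn_div_norm dist_norm)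
  then have "nearest_point A (q + dist p q *\<^sub>R sgn (p - q)) = q" by (simp add: q_def)
  moreover have "norm (sgn (p - q)) = 1" "0 < dist p q" "dist p q < R"
    using \<open>q \<noteq> p\<close> assms(5) by (simp_all add: norm_sgn q_def)
  ultimately have "nearest_point A (q + s *\<^sub>R sgn (p - q)) = q"
    using nearest_point_ray[OF assms(1) balls[OF \<open>q \<in> A\<close>]] assms(6,7) by blast
  then show ?thesis by (simp add: q_def)
qed

lemma nearest_point_polar_shift_bounds:
  fixes A :: "'a::euclidean_space set"
  assumes "closed A" "x \<in> A" and balls: "\<And>a. a \<in> A \<Longrightarrow> ball a R \<subseteq> Unp A" and "norm n = 1"
    and polar: "\<forall>b\<in>A. 0 < dist b x \<and> dist b x < \<delta> \<longrightarrow> n \<bullet> (b - x) \<le> \<epsilon> * norm (b - x)"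
    and "0 < \<epsilon>" "\<epsilon> \<le> 1/4" "0 < t" "2 * t < \<delta>" "2 * t \<le> R"
  defines "p \<equiv> x + t *\<^sub>R n" and "q \<equiv> nearest_point A (x + t *\<^sub>R n)"
  shows "p \<in> Unp A" "p \<notin> A" "dist p q \<le> t" "dist q x \<le> 2 * \<epsilon> * t" "norm (sgn (p - q) - n) \<le> 8 * \<epsilon>"
proof -
  have "dist p x = t" using assms(4,8) by (simp add: p_def dist_norm)
  then have "p \<in> ball x R" using assms(8,10) by (simp add: dist_commute)
  then show pU: "p \<in> Unp A" using balls[OF assms(2)] by blast
  then show "dist p q \<le> t"
    using nearest_point_le[OF pU assms(2)] \<open>dist p x = t\<close> by (simp add: q_def p_def)
  show "p \<notin> A"
  proof
    assume "p \<in> A"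
    moreover have "0 < dist p x \<and> dist p x < \<delta>" using \<open>dist p x = t\<close> assms(8,9) by simp
    ultimately have "n \<bullet> (p - x) \<le> \<epsilon> * norm (p - x)" using polar by blast
    moreover have "n \<bullet> (p - x) = t" "norm (p - x) = t"
      using assms(4,8) by (simp_all add: p_def dot_square_norm)
    ultimately show False using assms(7,8) by simp
  qed
  have "q \<in> A" using nearest_point_in[OF pU] by (simp add: q_def p_def)
  define D m e where "D = dist p q" and "m = sgn (p - q)" and "e = x - q"
  have "0 < D" "norm m = 1" using \<open>p \<notin> A\<close> \<open>q \<in> A\<close> by (auto simp: D_def m_def norm_sgn)
  have De: "D *\<^sub>R m = t *\<^sub>R n + e"
    using \<open>0 < D\<close> by (simp add: D_def m_def e_def p_def sgn_div_norm dist_norm)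
  have "q + (R / 2) *\<^sub>R m \<in> Unp A"
    using balls[OF \<open>q \<in> A\<close>] \<open>norm m = 1\<close> assms(8,10) by (auto simp: dist_norm)
  moreover have "nearest_point A (q + (R / 2) *\<^sub>R m) = q"
    using nearest_point_normal_ray[OF assms(1) balls pU \<open>p \<notin> A\<close>, of "R / 2"]
      \<open>dist p q \<le> t\<close> assms(8,10)
    by (simp add: q_def p_def m_def)
  ultimately have normal: "2 * (R / 2) * (m \<bullet> e) \<le> norm e ^ 2"
    unfolding e_def by (rule inner_normal_le_norm_square[OF _ _ assms(2)])
  have tangent: "- (n \<bullet> e) \<le> \<epsilon> * norm e"
  proof (cases "q = x")
    case False
    have "dist q x \<le> dist q p + dist p x" by (rule dist_triangle)
    then have "dist q x < \<delta>"
      using \<open>dist p q \<le> t\<close> \<open>dist p x = t\<close> assms(9) by (simp add: dist_commute)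
    then show ?thesis
      using polar \<open>q \<in> A\<close> False by (simp add: e_def inner_diff_right norm_minus_commute)
  qed (simp add: e_def)
  have "norm e \<le> 2 * \<epsilon> * t"
    using norm_le_if_normal_polar_bounds[OF De normal tangent \<open>0 < D\<close>] \<open>dist p q \<le> t\<close> assms(6,10)
    by (simp add: D_def)
  then show "dist q x \<le> 2 * \<epsilon> * t" by (simp add: e_def dist_norm norm_minus_commute)
  show "norm (sgn (p - q) - n) \<le> 8 * \<epsilon>"
    using unit_vectors_close_if_multiples_close[OF \<open>norm m = 1\<close> assms(4,8), of D "2 * \<epsilon>"]
      De \<open>norm e \<le> 2 * \<epsilon> * t\<close> \<open>0 < D\<close> assms(7) by (simp add: m_def)
qed

lemma exists_approximate_normal_ray:
  fixes A :: "'a::euclidean_space set"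
  assumes "closed A" "x \<in> A" and balls: "\<And>a. a \<in> A \<Longrightarrow> ball a R \<subseteq> Unp A"
    and "R > 0" "norm n = 1" and polar: "\<And>u. u \<in> Tan A x \<Longrightarrow> n \<bullet> u \<le> 0" and "\<gamma> > 0"
  obtains q m where "q \<in> A" "norm m = 1" "\<And>s. 0 \<le> s \<Longrightarrow> s < R \<Longrightarrow> nearest_point A (q + s *\<^sub>R m) = q"
    and "dist q x \<le> \<gamma>" "norm (m - n) \<le> \<gamma>"
proof -
  define \<epsilon> where "\<epsilon> = min (1/4) (\<gamma> / 8)"
  have \<epsilon>: "0 < \<epsilon>" "\<epsilon> \<le> 1/4" "8 * \<epsilon> \<le> \<gamma>" using \<open>\<gamma> > 0\<close> by (auto simp: \<epsilon>_def)
  obtain \<delta> where "\<delta> > 0"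
    and \<delta>: "\<forall>b\<in>A. 0 < dist b x \<and> dist b x < \<delta> \<longrightarrow> n \<bullet> (b - x) \<le> \<epsilon> * norm (b - x)"
    using polar_Tan_inner_le_near[OF polar \<epsilon>(1)] by blast
  define t where "t = min (\<delta> / 3) (min (R / 2) \<gamma>)"
  have t: "0 < t" "2 * t < \<delta>" "2 * t \<le> R" "t \<le> \<gamma>"
    using \<open>\<delta> > 0\<close> \<open>R > 0\<close> \<open>\<gamma> > 0\<close> by (auto simp: t_def)
  define p q where "p = x + t *\<^sub>R n" and "q = nearest_point A (x + t *\<^sub>R n)"
  note bounds = nearest_point_polar_shift_bounds[OF assms(1,2) balls assms(5) \<delta> \<epsilon>(1,2) t(1-3),
      folded p_def q_def]
  show thesis
  proof
    show "q \<in> A" using nearest_point_in[OF bounds(1)] by (simp add: q_def p_def)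
    show "norm (sgn (p - q)) = 1" using bounds(2) \<open>q \<in> A\<close> by (auto simp: norm_sgn)
    show "nearest_point A (q + s *\<^sub>R sgn (p - q)) = q" if "0 \<le> s" "s < R" for s
      using nearest_point_normal_ray[OF assms(1) balls bounds(1,2)] bounds(3) t that
      by (simp add: q_def p_def)
    have "2 * \<epsilon> * t \<le> t" using \<epsilon>(2) t(1) by simp
    then show "dist q x \<le> \<gamma>" using bounds(4) t(4) by simp
    show "norm (sgn (p - q) - n) \<le> \<gamma>" using bounds(5) \<epsilon>(3) by simp
  qed
qed

lemma nearest_point_add_polar_Tan:
  fixes A :: "'a::euclidean_space set"
  assumes "closed A" "x \<in> A" and balls: "\<And>a. a \<in> A \<Longrightarrow> ball a R \<subseteq> Unp A"
    and "R > 0" "norm n = 1" and polar: "\<And>u. u \<in> Tan A x \<Longrightarrow> n \<bullet> u \<le> 0"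
    and "0 \<le> s" "s < R"
  shows "nearest_point A (x + s *\<^sub>R n) = x"
proof -
  define z where "z = x + s *\<^sub>R n"
  \<comment> \<open>Full normal rays from \<open>q k \<longlonglongrightarrow> x\<close> in directions \<open>m k \<longlonglongrightarrow> n\<close>; continuity of the
    nearest-point map at \<open>z\<close> then identifies \<open>nearest_point A z\<close> with \<open>lim q = x\<close>.\<close>
  have "\<forall>k::nat. \<exists>q m. q \<in> A \<and> nearest_point A (q + s *\<^sub>R m) = q
      \<and> dist q x \<le> inverse (real (Suc k)) \<and> dist m n \<le> inverse (real (Suc k))"
  proof
    fix k :: nat
    show "\<exists>q m. q \<in> A \<and> nearest_point A (q + s *\<^sub>R m) = q
      \<and> dist q x \<le> inverse (real (Suc k)) \<and> dist m n \<le> inverse (real (Suc k))"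
      by (rule exists_approximate_normal_ray[OF assms(1-6), of "inverse (real (Suc k))"])
        (use assms(7,8) in \<open>auto simp: dist_norm\<close>)
  qed
  then obtain q m where qm: "\<And>k. q k \<in> A" "\<And>k. nearest_point A (q k + s *\<^sub>R m k) = q k"
    and "\<And>k. dist (q k) x \<le> inverse (real (Suc k))" "\<And>k. dist (m k) n \<le> inverse (real (Suc k))"
    by metis
  then have "q \<longlonglongrightarrow> x" "m \<longlonglongrightarrow> n" by (simp_all add: LIMSEQ_if_dist_le_inverse_Suc)
  then have w: "(\<lambda>k. q k + s *\<^sub>R m k) \<longlonglongrightarrow> z" unfolding z_def by (intro tendsto_intros)
  define g where "g = (R - s) / 2"
  have "cball z g \<subseteq> Unp A"
  proof
    fix y assume "y \<in> cball z g"
    then have "dist x y < R"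
      using dist_triangle[of x y z] assms(5,7,8) by (simp add: z_def g_def dist_norm)
    then show "y \<in> Unp A" using balls[OF assms(2)] by auto
  qed
  moreover have "eventually (\<lambda>k. q k + s *\<^sub>R m k \<in> cball z g) sequentially"
    using topological_tendstoD[OF w open_ball[of z g]] assms(8)
    by (auto simp: g_def elim: eventually_mono)
  ultimately have "(\<lambda>k. nearest_point A (q k + s *\<^sub>R m k)) \<longlonglongrightarrow> nearest_point A z"
    using continuous_on_tendsto_compose[OF continuous_on_nearest_point[OF assms(1) compact_cball] w]
      assms(8) by (simp add: g_def)
  then have "q \<longlonglongrightarrow> nearest_point A z" using qm(2) by simp
  then show ?thesis using LIMSEQ_unique \<open>q \<longlonglongrightarrow> x\<close> z_def by blast
qed

section \<open>Angles between tangent lines\<close>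

lemma span_eq_span_unit_if_dim_1:
  fixes S :: "'a::euclidean_space set"
  assumes "dim (span S) = 1"
  obtains u where "norm u = 1" "span S = span {u}"
proof -
  obtain B where B: "B \<subseteq> span S" "independent B" "span S \<subseteq> span B" "card B = 1"
    using basis_exists[of "span S"] assms by metis
  then obtain b where "B = {b}" using card_1_singletonE by blast
  then have "b \<noteq> 0" using B(2) by auto
  have "span B \<subseteq> span S" using span_mono[OF B(1)] by (simp only: span_span)
  then have "span S = span {b}" using B(3) \<open>B = {b}\<close> by blast
  have "b = norm b *\<^sub>R sgn b" using \<open>b \<noteq> 0\<close> by (simp add: sgn_div_norm)
  then have "b \<in> span {sgn b}" by (metis span_base span_scale singletonI)
  moreover have "sgn b \<in> span {b}" by (metis sgn_div_norm span_base span_scale singletonI)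
  ultimately have "span {b} = span {sgn b}" by (simp add: span_eq)
  then show thesis using that[of "sgn b"] \<open>b \<noteq> 0\<close> \<open>span S = span {b}\<close> by (simp add: norm_sgn)
qed

lemma norm_diff_projection_square:
  fixes s u :: "'a::real_inner"
  assumes "norm s = 1" "norm u = 1"
  shows "norm (s - (s \<bullet> u) *\<^sub>R u) ^ 2 = 1 - (s \<bullet> u) ^ 2"
  using assms unfolding power2_norm_eq_inner norm_eq_1
  by (simp add: inner_diff_left inner_diff_right inner_commute power2_eq_square)

lemma sin_angle_Tan_line_le:
  fixes A :: "'a::euclidean_space set"
  assumes "closed A" "x \<in> A" and balls: "\<And>a. a \<in> A \<Longrightarrow> ball a R \<subseteq> Unp A"
    and "0 < r" "r < R" "norm u = 1" "Tan A x \<subseteq> span {u}" "b \<in> A" "b \<noteq> x"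
  shows "1 - (sgn (b - x) \<bullet> u) ^ 2 \<le> (dist b x / (2 * r)) ^ 2"
proof -
  define s where "s = sgn (b - x)"
  define w where "w = s - (s \<bullet> u) *\<^sub>R u"
  \<comment> \<open>\<open>sgn w\<close> is polar to \<open>Tan A x\<close>, so the ball of radius \<open>r\<close> about \<open>x + r sgn w\<close> misses \<open>A\<close>.\<close>
  have "norm s = 1" using assms(9) by (simp add: s_def norm_sgn)
  have "w \<bullet> u = 0" using assms(6) by (simp add: w_def inner_diff_left dot_square_norm)
  have w2: "norm w ^ 2 = 1 - (s \<bullet> u) ^ 2"
    unfolding w_def using \<open>norm s = 1\<close> assms(6) by (rule norm_diff_projection_square)
  have ws: "w \<bullet> s = norm w ^ 2"
    using \<open>norm s = 1\<close> w2
    by (simp add: w_def inner_diff_left inner_diff_right dot_square_norm inner_commute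
        power2_eq_square)
  show ?thesis
  proof (cases "w = 0")
    case True
    then show ?thesis using w2 by (simp add: s_def)
  next
    case False
    define n where "n = sgn w"
    have "norm n = 1" using False by (simp add: n_def norm_sgn)
    moreover have "n \<bullet> v \<le> 0" if v: "v \<in> Tan A x" for v
    proof -
      obtain k where "v = k *\<^sub>R u" using assms(7) v by (auto simp: span_singleton)
      then show ?thesis using \<open>w \<bullet> u = 0\<close> by (simp add: n_def sgn_div_norm)
    qed
    ultimately have "nearest_point A (x + r *\<^sub>R n) = x"
      using nearest_point_add_polar_Tan[OF assms(1,2) balls] assms(4,5) by simp
    moreover have "x + r *\<^sub>R n \<in> Unp A"
      using balls[OF assms(2)] assms(4,5) \<open>norm n = 1\<close> by (auto simp: dist_norm)
    ultimately have "2 * r * (n \<bullet> (b - x)) \<le> norm (b - x) ^ 2"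
      using inner_normal_le_norm_square assms(8) by blast
    moreover have "n \<bullet> (b - x) = dist b x * norm w"
    proof -
      have "b - x = dist b x *\<^sub>R s" using assms(9) by (simp add: s_def dist_norm sgn_div_norm)
      moreover have "n \<bullet> s = norm w"
        using ws False by (simp add: n_def sgn_div_norm power2_eq_square field_simps)
      ultimately show ?thesis by simp
    qed
    ultimately have "norm w \<le> dist b x / (2 * r)"
      using assms(4,9) by (simp add: field_simps dist_norm power2_eq_square)
    then have "norm w ^ 2 \<le> (dist b x / (2 * r)) ^ 2" by (simp add: power_mono)
    then show ?thesis using w2 by (simp add: s_def)
  qed
qed

lemma sin_angle_lines_trans:
  fixes u v w :: "'a::real_inner"
  assumes "norm u = 1" "norm v = 1" "norm w = 1"
    and "1 - (w \<bullet> u) ^ 2 \<le> c ^ 2" "1 - (w \<bullet> v) ^ 2 \<le> c ^ 2" "0 \<le> c" "c \<le> 1/2"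
  shows "1 - (u \<bullet> v) ^ 2 \<le> (2 * c) ^ 2"
proof -
  define a b where "a = w \<bullet> u" and "b = w \<bullet> v"
  have c2: "c ^ 2 \<le> 1/4" using power_mono[OF assms(7,6), of 2] by (simp add: power2_eq_square)
  have "u \<bullet> v - a * b = (u - a *\<^sub>R w) \<bullet> (v - b *\<^sub>R w)"
    using assms(3)
    by (simp add: a_def b_def inner_diff_left inner_diff_right inner_commute dot_square_norm)
  moreover have "norm (u - a *\<^sub>R w) ^ 2 = 1 - a ^ 2" and nb: "norm (v - b *\<^sub>R w) ^ 2 = 1 - b ^ 2"
    using norm_diff_projection_square[OF assms(1,3)] norm_diff_projection_square[OF assms(2,3)]
    by (simp_all add: a_def b_def inner_commute)
  ultimately have "(u \<bullet> v - a * b) ^ 2 \<le> (1 - a ^ 2) * (1 - b ^ 2)"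
    using Cauchy_Schwarz_ineq[of "u - a *\<^sub>R w" "v - b *\<^sub>R w"] by (simp add: power2_norm_eq_inner)
  also have "\<dots> \<le> c ^ 2 * c ^ 2"
  proof (rule mult_mono)
    show "1 - a ^ 2 \<le> c ^ 2" "1 - b ^ 2 \<le> c ^ 2" using assms(4,5) by (simp_all add: a_def b_def)
    show "0 \<le> 1 - b ^ 2" using nb by (metis zero_le_power2)
  qed simp
  also have "\<dots> = (c ^ 2) ^ 2" by (simp add: power2_eq_square)
  finally have "\<bar>u \<bullet> v - a * b\<bar> \<le> c ^ 2"
    using power2_le_iff_abs_le[of "c ^ 2" "u \<bullet> v - a * b"] by simp
  have "(1 - c ^ 2) * (1 - c ^ 2) \<le> a ^ 2 * b ^ 2"
    using assms(4,5) c2 by (intro mult_mono) (simp_all add: a_def b_def)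
  then have "(1 - c ^ 2) ^ 2 \<le> \<bar>a * b\<bar> ^ 2" by (simp add: power2_eq_square algebra_simps)
  then have "1 - c ^ 2 \<le> \<bar>a * b\<bar>" by (rule power2_le_imp_le) simp
  then have "1 - 2 * c ^ 2 \<le> \<bar>u \<bullet> v\<bar>" using \<open>\<bar>u \<bullet> v - a * b\<bar> \<le> c ^ 2\<close> by linarith
  then have "(1 - 2 * c ^ 2) ^ 2 \<le> (u \<bullet> v) ^ 2"
    using c2 power_mono[of "1 - 2 * c ^ 2" "\<bar>u \<bullet> v\<bar>" 2] by simp
  moreover have "1 - (2 * c) ^ 2 \<le> (1 - 2 * c ^ 2) ^ 2"
    using assms(6) by (simp add: power2_eq_square algebra_simps)
  ultimately show ?thesis by linarith
qed

lemma sin_angle_Tan_lines_le: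
  fixes A :: "'a::euclidean_space set"
  assumes "closed A" and balls: "\<And>a. a \<in> A \<Longrightarrow> ball a R \<subseteq> Unp A" and "0 < r" "r < R"
    and "x \<in> A" "norm u = 1" "Tan_span A x = span {u}"
    and "y \<in> A" "norm v = 1" "Tan_span A y = span {v}"
  shows "1 - (u \<bullet> v) ^ 2 \<le> (dist x y / r) ^ 2"
proof -
  have "(u \<bullet> v) ^ 2 \<le> 1"
    using Cauchy_Schwarz_ineq[of u v] assms(6,9) by (simp add: dot_square_norm)
  consider "r \<le> dist x y" | "x = y" | "x \<noteq> y" "dist x y < r" by linarith
  then show ?thesis
  proof cases
    case 1
    then have "1 \<le> (dist x y / r) ^ 2" using assms(3) by simp
    then show ?thesis using zero_le_power2[of "u \<bullet> v"] by linarith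
  next
    case 2
    then have "v \<in> span {u}" using assms(7,10) span_base[of v "{v}"] by simp
    then obtain k where "v = k *\<^sub>R u" by (auto simp: span_singleton)
    then have "\<bar>k\<bar> = 1" using assms(6,9) by simp
    then have "(u \<bullet> v) ^ 2 = 1"
      using \<open>v = k *\<^sub>R u\<close> assms(6) power2_abs[of k]
      by (simp add: dot_square_norm power_mult_distrib)
    then show ?thesis by simp
  next
    case 3
    have Tan: "Tan A x \<subseteq> span {u}" "Tan A y \<subseteq> span {v}"
      using span_superset[of "Tan A x"] span_superset[of "Tan A y"] assms(7,10)
      by (simp_all add: Tan_span_def)
    have "1 - (sgn (y - x) \<bullet> u) ^ 2 \<le> (dist x y / (2 * r)) ^ 2"
      using sin_angle_Tan_line_le[OF assms(1,5) balls assms(3,4,6) Tan(1) assms(8)] 3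
      by (simp add: dist_commute)
    moreover have "1 - (sgn (y - x) \<bullet> v) ^ 2 \<le> (dist x y / (2 * r)) ^ 2"
      using sin_angle_Tan_line_le[OF assms(1,8) balls assms(3,4,9) Tan(2) assms(5)] 3
      by (simp add: sgn_minus[of "y - x", simplified])
    moreover have "norm (sgn (y - x)) = 1" using 3 by (simp add: norm_sgn)
    moreover have "0 \<le> dist x y / (2 * r)" "dist x y / (2 * r) \<le> 1/2" using 3 assms(3) by simp_all
    ultimately have "1 - (u \<bullet> v) ^ 2 \<le> (2 * (dist x y / (2 * r))) ^ 2"
      using sin_angle_lines_trans[OF assms(6,9)] by blast
    then show ?thesis using assms(3) by simp
  qed
qed

lemma infdist_span_singleton_le:
  fixes z v :: "'a::euclidean_space"
  assumes "norm z = 1" "norm v = 1" "1 - (z \<bullet> v) ^ 2 \<le> B ^ 2" "0 \<le> B"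
  shows "infdist z (span {v}) \<le> B"
proof -
  have "dist z ((z \<bullet> v) *\<^sub>R v) ^ 2 = 1 - (z \<bullet> v) ^ 2"
    unfolding dist_norm using assms(1,2) by (rule norm_diff_projection_square)
  then have "dist z ((z \<bullet> v) *\<^sub>R v) \<le> B"
    using power2_le_imp_le[of "dist z ((z \<bullet> v) *\<^sub>R v)" B] assms(3,4) by simp
  moreover have "(z \<bullet> v) *\<^sub>R v \<in> span {v}" by (simp add: span_base span_scale)
  ultimately show ?thesis using infdist_le2 by blast
qed

lemma rho1_span_singleton_le:
  fixes u v :: "'a::euclidean_space"
  assumes "norm u = 1" "norm v = 1" "1 - (u \<bullet> v) ^ 2 \<le> B ^ 2" "0 \<le> B"
  shows "rho1 (span {u}) (span {v}) \<le> B"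
proof -
  have "(SUP z\<in>{z\<in>span {u}. norm z = 1}. infdist z (span {v})) \<le> B"
    if "norm u = 1" "norm v = 1" "1 - (u \<bullet> v) ^ 2 \<le> B ^ 2" for u v :: 'a
  proof (rule cSUP_least)
    show "{z \<in> span {u}. norm z = 1} \<noteq> {}" using that(1) span_base[of u "{u}"] by auto
    fix z assume z: "z \<in> {z \<in> span {u}. norm z = 1}"
    then obtain k where "z = k *\<^sub>R u" by (auto simp: span_singleton)
    have "norm z = 1" using z by simp
    then have "\<bar>k\<bar> = 1" using \<open>z = k *\<^sub>R u\<close> that(1) by simp
    then have "(z \<bullet> v) ^ 2 = (u \<bullet> v) ^ 2"
      using \<open>z = k *\<^sub>R u\<close> power2_abs[of k] by (simp add: power_mult_distrib)
    then show "infdist z (span {v}) \<le> B"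
      using infdist_span_singleton_le[OF \<open>norm z = 1\<close> that(2) _ assms(4)] that(3) by simp
  qed
  then show ?thesis unfolding rho1_def using assms(1-3) by (simp add: inner_commute)
qed

theorem proposition3p4:
  fixes A :: "'a::euclidean_space set" and r :: real
  assumes "0 < r" and "ereal r < reach A"
  shows "\<forall>x\<in>T1 A. \<forall>y\<in>T1 A. rho1 (psi1 A x) (psi1 A y) \<le> (1 / r) * dist x y"
proof (intro ballI)
  fix x y assume "x \<in> T1 A" "y \<in> T1 A"
  obtain R where "r < R" "ereal R < reach A" using ereal_dense2[OF assms(2)] by auto
  have balls: "ball a R \<subseteq> Unp A" if "a \<in> A" for a
    using ball_subset_Unp_if_less_reach[OF \<open>ereal R < reach A\<close> that] .
  have "closed A" using closed_if_balls_subset_Unp[OF _ balls] assms(1) \<open>r < R\<close> by simp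
  have "\<exists>u. norm u = 1 \<and> Tan_span A z = span {u}" if "z \<in> T1 A" for z
    using span_eq_span_unit_if_dim_1[of "Tan A z"] that unfolding T1_def Tan_span_def by blast
  then obtain u v
    where "norm u = 1" "Tan_span A x = span {u}" "norm v = 1" "Tan_span A y = span {v}"
    using \<open>x \<in> T1 A\<close> \<open>y \<in> T1 A\<close> by meson
  moreover have "x \<in> A" "y \<in> A" using \<open>x \<in> T1 A\<close> \<open>y \<in> T1 A\<close> by (auto simp: T1_def)
  ultimately have "1 - (u \<bullet> v) ^ 2 \<le> (dist x y / r) ^ 2"
    by (intro sin_angle_Tan_lines_le[OF \<open>closed A\<close> balls assms(1) \<open>r < R\<close>])
  then show "rho1 (psi1 A x) (psi1 A y) \<le> (1 / r) * dist x y"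
    using rho1_span_singleton_le[OF \<open>norm u = 1\<close> \<open>norm v = 1\<close>] assms(1)
      \<open>Tan_span A x = span {u}\<close> \<open>Tan_span A y = span {v}\<close> by (simp add: psi1_def)
qed

end
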